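(* Let $L=(l_1,\dots,l_n)$, $n\ge 4$, be a generic length vector satisfying the strict triangle inequality. For any two vertices $V,V'$ of $\Gamma(L)$, there is a path in $\Gamma(L)$ of length at most $7$ from $V$ either to $V'$ or to the mirror image of $V'$.
   Context: Let $n\ge 4$ and $L=(l_1,\dots,l_n)$ be positive reals with $l_i<\sum_{j\ne i}l_j$ for every $i$ (strict triangle inequality), and generic: there is no $J\subseteq[n]$ with $\sum_{i\in J}l_i=\sum_{i\notin J}l_i$. Here $[n]=\{1,\dots,n\}$ and $|L|=\sum_{i=1}^n l_i$. A set $I\subseteq[n]$ is short if $\sum_{i\in I}l_i<|L|/2$ and long otherwise. A cyclically ordered partition of $[n]$ into $k$ parts is a sequence $(A_1,\dots,A_k)$ of pairwise disjoint nonempty sets with union $[n]$, considered up to cyclic shifts $(A_1,\dots,A_k)\sim(A_2,\dots,A_k,A_1)$; there is no ordering inside a part. It is admissible if every part is short. The graph $\Gamma(L)$ has as vertices the admissible cyclically ordered partitions of $[n]$ into 3 parts, written $(I,J,K)$, and as edges the admissible cyclically ordered partitions into 4 parts $(A,B,C,D)$; such an edge is incident to each of the partitions $(A\cup B,C,D)$, $(A,B\cup C,D)$, $(A,B,C\cup D)$, $(D\cup A,B,C)$ that is admissible. Equivalently, two vertices are adjacent iff one is obtained from the other by moving a nonempty proper subset of one part into another part. The length of a path is its number of edges. The mirror image of a vertex $(I,J,K)$ is the vertex $(J,I,K)$ (same parts, reversed cyclic order). *)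

theory Defs
  imports Complex_Main
begin

text \<open>Length vector: l :: nat => real, indices 1..n.\<close>

definition total_len :: "(nat \<Rightarrow> real) \<Rightarrow> nat \<Rightarrow> real" where
  "total_len l n = (\<Sum>i\<in>{1..n}. l i)"

definition short :: "(nat \<Rightarrow> real) \<Rightarrow> nat \<Rightarrow> nat set \<Rightarrow> bool" where
  "short l n S \<longleftrightarrow> (\<Sum>i\<in>S. l i) < total_len l n / 2"

definition is_opart :: "nat \<Rightarrow> nat set list \<Rightarrow> bool" where
  "is_opart n ps \<longleftrightarrow> (\<forall>p\<in>set ps. p \<noteq> {}) \<and> \<Union>(set ps) = {1..n} \<and>
     (\<forall>i<length ps. \<forall>j<length ps. i \<noteq> j \<longrightarrow> ps ! i \<inter> ps ! j = {})"

definition admissible :: "(nat \<Rightarrow> real) \<Rightarrow> nat \<Rightarrow> nat set list \<Rightarrow> bool" where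
  "admissible l n ps \<longleftrightarrow> is_opart n ps \<and> (\<forall>p\<in>set ps. short l n p)"

text \<open>A cyclically ordered partition = the class of a list under cyclic shifts.\<close>
definition cyc :: "nat set list \<Rightarrow> nat set list set" where
  "cyc ps = {rotate k ps | k. True}"

definition gamma_vertices :: "(nat \<Rightarrow> real) \<Rightarrow> nat \<Rightarrow> nat set list set set" where
  "gamma_vertices l n = {cyc ps | ps. length ps = 3 \<and> admissible l n ps}"

fun merges :: "nat set list \<Rightarrow> nat set list set" where
  "merges [A, B, C, D] = {[A \<union> B, C, D], [A, B \<union> C, D], [A, B, C \<union> D], [D \<union> A, B, C]}"
| "merges _ = {}"

text \<open>V and W are adjacent iff some edge (admissible cyclic 4-partition) is incident to both.\<close>
definition gamma_adj :: "(nat \<Rightarrow> real) \<Rightarrow> nat \<Rightarrow> nat set list set \<Rightarrow> nat set list set \<Rightarrow> bool" where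
  "gamma_adj l n V W \<longleftrightarrow> V \<noteq> W \<and> (\<exists>ps. length ps = 4 \<and> admissible l n ps \<and>
      (\<exists>q\<in>merges ps. admissible l n q \<and> cyc q = V) \<and>
      (\<exists>q\<in>merges ps. admissible l n q \<and> cyc q = W))"

text \<open>Mirror image: reverse the cyclic order; cyc [I,J,K] maps to cyc [K,J,I] = cyc [J,I,K].\<close>
definition mirror :: "nat set list set \<Rightarrow> nat set list set" where
  "mirror V = rev ` V"

definition path_le :: "(nat \<Rightarrow> real) \<Rightarrow> nat \<Rightarrow> nat \<Rightarrow> nat set list set \<Rightarrow> nat set list set \<Rightarrow> bool" where
  "path_le l n m V W \<longleftrightarrow> (\<exists>k\<le>m. \<exists>p :: nat \<Rightarrow> nat set list set.
      p 0 = V \<and> p k = W \<and> (\<forall>i<k. gamma_adj l n (p i) (p (Suc i))))"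

end

theory Submission
  imports Defs
begin

text \<open>
  Let \<open>m\<close> be an index of maximal length. Every vertex is joined by a path of length at most 2
  to a vertex having \<open>{m}\<close> as a part: the rest \<open>R\<close> of the part containing \<open>m\<close> is moved into a
  neighbouring part \<open>J\<close> or \<open>K\<close>. If neither can absorb all of \<open>R\<close>, first move a piece
  \<open>R\<^sub>1 \<subseteq> R\<close> that keeps \<open>J \<union> R\<^sub>1\<close> short but such that \<open>J \<union> R\<^sub>1 \<union> {e}\<close> is long for some
  \<open>e \<in> R - R\<^sub>1\<close>; since \<open>l e \<le> l m\<close>, also \<open>J \<union> R\<^sub>1 \<union> {m}\<close> is long, so by genericity its
  complement, \<open>K\<close> together with the rest of \<open>R\<close>, is short and takes the second move.
  Two vertices \<open>({m}, B, C)\<close> and \<open>({m}, B', C')\<close> are assembled from the four blocks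
  \<open>B \<inter> B'\<close>, \<open>B \<inter> C'\<close>, \<open>C \<inter> B'\<close>, \<open>C \<inter> C'\<close>. Moving blocks one at a time reaches
  \<open>({m}, B', C')\<close> in two moves if \<open>{m} \<union> (B \<inter> B')\<close> is long (its complement is then short),
  and the mirror image \<open>({m}, C', B')\<close> in three moves otherwise; if some block is empty, one
  move suffices. This gives \<open>2 + 3 + 2\<close>.
\<close>

lemma sum_crosses_threshold:
  fixes f :: "'a \<Rightarrow> 'b::linordered_ab_group_add"
  assumes "finite R" "a < t" "t \<le> a + sum f R"
  shows "\<exists>R1 e. R1 \<subseteq> R \<and> e \<in> R - R1 \<and> a + sum f R1 < t \<and> t \<le> a + sum f R1 + f e"
  using assms(1,3)
proof (induction R rule: finite_induct)
  case empty
  with assms(2) show ?case by simp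
next
  case (insert x R)
  show ?case
  proof (cases "t \<le> a + sum f R")
    case True
    with insert.IH show ?thesis by blast
  next
    case False
    with insert show ?thesis
      by (intro exI[of _ R] exI[of _ x]) (auto simp: algebra_simps)
  qed
qed

lemma sum_Un_disjoint_atLeastAtMost:
  fixes n :: nat
  shows "A \<subseteq> {1..n} \<Longrightarrow> B \<subseteq> {1..n} \<Longrightarrow> A \<inter> B = {} \<Longrightarrow> sum l (A \<union> B) = sum l A + sum l B"
  by (rule sum.union_disjoint) (auto intro: finite_subset)

subsection \<open>Admissible partitions and their cyclic classes\<close>

lemma admissible3_iff:
  "admissible l n [A, B, C] \<longleftrightarrow> A \<noteq> {} \<and> B \<noteq> {} \<and> C \<noteq> {} \<and> A \<union> B \<union> C = {1..n} \<and>
     A \<inter> B = {} \<and> A \<inter> C = {} \<and> B \<inter> C = {} \<and> short l n A \<and> short l n B \<and> short l n C"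
  unfolding admissible_def is_opart_def
  by (simp add: All_less_Suc2 numeral_eq_Suc Int_commute conj_commute conj_left_commute Un_ac)

lemma admissible4_iff:
  "admissible l n [A, B, C, D] \<longleftrightarrow> A \<noteq> {} \<and> B \<noteq> {} \<and> C \<noteq> {} \<and> D \<noteq> {} \<and>
     A \<union> B \<union> C \<union> D = {1..n} \<and> A \<inter> B = {} \<and> A \<inter> C = {} \<and> A \<inter> D = {} \<and>
     B \<inter> C = {} \<and> B \<inter> D = {} \<and> C \<inter> D = {} \<and>
     short l n A \<and> short l n B \<and> short l n C \<and> short l n D"
  unfolding admissible_def is_opart_def
  by (simp add: All_less_Suc2 numeral_eq_Suc Int_commute conj_commute conj_left_commute Un_ac)

lemma admissible3_rotate: "admissible l n [A, B, C] \<Longrightarrow> admissible l n [B, C, A]"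
  unfolding admissible3_iff by blast

lemma admissible3_rev: "admissible l n [A, B, C] \<Longrightarrow> admissible l n [C, B, A]"
  unfolding admissible3_iff by blast

lemma admissible4_rev: "admissible l n [A, B, C, D] \<Longrightarrow> admissible l n [D, C, B, A]"
  by (simp add: admissible4_iff Un_ac Int_commute conj_commute conj_left_commute)

lemma admissible3_union: "admissible l n [A, B, C] \<Longrightarrow> A \<union> B \<union> C = {1..n}"
  unfolding admissible3_iff by blast

lemma admissible3_Un_eq: "admissible l n [A, B, C] \<Longrightarrow> B \<union> C = {1..n} - A"
  unfolding admissible3_iff by blast

lemma cyc_eq_rotations:
  assumes "xs \<noteq> []"
  shows "cyc xs = (\<lambda>k. rotate k xs) ` {..<length xs}"
proof -
  have "rotate k xs \<in> (\<lambda>k. rotate k xs) ` {..<length xs}" for k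
    using assms by (metis rotate_conv_mod image_eqI lessThan_iff length_greater_0_conv mod_less_divisor)
  then show ?thesis
    unfolding cyc_def by blast
qed

lemma cyc_three_eq: "cyc [a, b, c] = {[a, b, c], [b, c, a], [c, a, b]}"
proof -
  have "{..<length [a, b, c]} = {0, 1, 2}" by auto
  then show ?thesis
    by (simp add: cyc_eq_rotations numeral_2_eq_2 insert_commute)
qed

lemma cyc_three_rotate: "cyc [a, b, c] = cyc [b, c, a]"
  unfolding cyc_three_eq by auto

lemma mirror_cyc_three: "mirror (cyc [a, b, c]) = cyc [c, b, a]"
  unfolding mirror_def cyc_three_eq by auto

lemma mirror_mirror: "mirror (mirror V) = V"
  unfolding mirror_def by (simp add: image_image)

lemma gamma_vertex_with_part:
  assumes "V \<in> gamma_vertices l n" "m \<in> {1..n}"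
  shows "\<exists>I J K. V = cyc [I, J, K] \<and> admissible l n [I, J, K] \<and> m \<in> I"
proof -
  obtain A B C where V: "V = cyc [A, B, C]" and adm: "admissible l n [A, B, C]"
    using assms(1) unfolding gamma_vertices_def by (auto simp: length_Suc_conv numeral_eq_Suc)
  have "m \<in> A \<union> B \<union> C"
    using adm assms(2) unfolding admissible3_iff by blast
  then consider "m \<in> A" | "m \<in> B" | "m \<in> C" by blast
  then show ?thesis
    by cases (use V adm admissible3_rotate cyc_three_rotate in metis)+
qed

lemma gamma_adj_sym: "gamma_adj l n V W \<Longrightarrow> gamma_adj l n W V"
  unfolding gamma_adj_def by blast

lemma gamma_adj_of_admissible4:
  assumes "admissible l n [A, B, C, D]" "admissible l n [A \<union> B, C, D]" "admissible l n [A, B \<union> C, D]"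
  shows "gamma_adj l n (cyc [A \<union> B, C, D]) (cyc [A, B \<union> C, D])"
  unfolding gamma_adj_def
proof (intro conjI exI[of _ "[A, B, C, D]"])
  show "cyc [A \<union> B, C, D] \<noteq> cyc [A, B \<union> C, D]"
  proof
    assume "cyc [A \<union> B, C, D] = cyc [A, B \<union> C, D]"
    then have "[A, B \<union> C, D] \<in> cyc [A \<union> B, C, D]" by (simp add: cyc_three_eq)
    with assms(1) show False by (auto simp: cyc_three_eq admissible4_iff)
  qed
  show "\<exists>q\<in>merges [A, B, C, D]. admissible l n q \<and> cyc q = cyc [A \<union> B, C, D]"
    using assms(2) by simp
  show "\<exists>q\<in>merges [A, B, C, D]. admissible l n q \<and> cyc q = cyc [A, B \<union> C, D]"
    using assms(3) by simp
qed (use assms(1) in simp_all)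

lemma merges_mirror:
  assumes "q \<in> merges [A, B, C, D]" "admissible l n q"
  shows "\<exists>q'\<in>merges [D, C, B, A]. admissible l n q' \<and> cyc q' = mirror (cyc q)"
proof -
  from assms(1) consider "q = [A \<union> B, C, D]" | "q = [A, B \<union> C, D]" | "q = [A, B, C \<union> D]"
    | "q = [D \<union> A, B, C]" by auto
  then show ?thesis
  proof cases
    case 1
    then show ?thesis using assms(2)
      by (intro bexI[of _ "[D, C, B \<union> A]"]) (auto simp: mirror_cyc_three Un_commute dest: admissible3_rev)
  next
    case 2
    then show ?thesis using assms(2)
      by (intro bexI[of _ "[D, C \<union> B, A]"]) (auto simp: mirror_cyc_three Un_commute dest: admissible3_rev)
  next
    case 3
    then show ?thesis using assms(2)
      by (intro bexI[of _ "[D \<union> C, B, A]"]) (auto simp: mirror_cyc_three Un_commute dest: admissible3_rev)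
  next
    case 4
    have "admissible l n [A \<union> D, C, B]"
      using assms(2) 4 by (metis admissible3_rev admissible3_rotate Un_commute)
    moreover have "cyc [A \<union> D, C, B] = mirror (cyc q)"
      using 4 by (metis mirror_cyc_three cyc_three_rotate Un_commute)
    ultimately show ?thesis by simp
  qed
qed

lemma gamma_adj_mirror:
  assumes "gamma_adj l n V W"
  shows "gamma_adj l n (mirror V) (mirror W)"
proof -
  obtain ps where "length ps = 4" and adm: "admissible l n ps" and "V \<noteq> W"
    and V: "\<exists>q\<in>merges ps. admissible l n q \<and> cyc q = V"
    and W: "\<exists>q\<in>merges ps. admissible l n q \<and> cyc q = W"
    using assms unfolding gamma_adj_def by blast
  then obtain A B C D where ps: "ps = [A, B, C, D]"
    by (auto simp: length_Suc_conv numeral_eq_Suc)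
  have "mirror V \<noteq> mirror W"
    using \<open>V \<noteq> W\<close> by (metis mirror_mirror)
  then show ?thesis
    unfolding gamma_adj_def
  proof (intro conjI exI[of _ "[D, C, B, A]"])
    show "\<exists>q\<in>merges [D, C, B, A]. admissible l n q \<and> cyc q = mirror V"
      using V merges_mirror unfolding ps by blast
    show "\<exists>q\<in>merges [D, C, B, A]. admissible l n q \<and> cyc q = mirror W"
      using W merges_mirror unfolding ps by blast
  qed (use admissible4_rev adm ps in simp_all)
qed

lemma relpowp_sym:
  assumes "symp P" "(P ^^ k) x y"
  shows "(P ^^ k) y x"
  using assms(2)
proof (induction k arbitrary: y)
  case (Suc k)
  from Suc.prems obtain z where "(P ^^ k) x z" "P z y" by (rule relpowp_Suc_E)
  with Suc.IH assms(1) show ?case by (meson relpowp_Suc_I2 sympD)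
qed simp

lemma relpowp_map:
  assumes "\<And>x y. P x y \<Longrightarrow> P (f x) (f y)" "(P ^^ k) x y"
  shows "(P ^^ k) (f x) (f y)"
  using assms(2)
proof (induction k arbitrary: y)
  case (Suc k)
  from Suc.prems obtain z where "(P ^^ k) x z" "P z y" by (rule relpowp_Suc_E)
  with Suc.IH assms(1) show ?case by (meson relpowp_Suc_I)
qed simp

lemma path_le_iff_relpowp: "path_le l n m V W \<longleftrightarrow> (\<exists>k\<le>m. (gamma_adj l n ^^ k) V W)"
  unfolding path_le_def relpowp_fun_conv by blast

lemma path_le_refl: "path_le l n m V V"
  unfolding path_le_iff_relpowp by (intro exI[of _ 0]) simp

lemma path_le_adj: "gamma_adj l n V W \<Longrightarrow> path_le l n 1 V W"
  unfolding path_le_iff_relpowp by (metis order_refl relpowp_1)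

lemma path_le_mono: "path_le l n m V W \<Longrightarrow> m \<le> m' \<Longrightarrow> path_le l n m' V W"
  unfolding path_le_iff_relpowp by (meson order_trans)

lemma path_le_trans:
  assumes "path_le l n a U V" "path_le l n b V W"
  shows "path_le l n (a + b) U W"
proof -
  obtain j k where "j \<le> a" "k \<le> b" "(gamma_adj l n ^^ j) U V" "(gamma_adj l n ^^ k) V W"
    using assms unfolding path_le_iff_relpowp by blast
  then show ?thesis
    unfolding path_le_iff_relpowp by (intro exI[of _ "j + k"]) (auto simp: relpowp_add)
qed

lemma path_le_sym: "path_le l n m V W \<Longrightarrow> path_le l n m W V"
  unfolding path_le_iff_relpowp using relpowp_sym[of "gamma_adj l n"] gamma_adj_sym by (meson sympI)

lemma path_le_mirror: "path_le l n m V W \<Longrightarrow> path_le l n m (mirror V) (mirror W)"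
  unfolding path_le_iff_relpowp using relpowp_map[of "gamma_adj l n" mirror] gamma_adj_mirror by meson

lemma path_le_adj2:
  "gamma_adj l n U V \<Longrightarrow> gamma_adj l n V W \<Longrightarrow> path_le l n 2 U W"
  using path_le_trans[OF path_le_adj path_le_adj] by (simp add: numeral_2_eq_2)

lemma path_le_adj3:
  "gamma_adj l n U V \<Longrightarrow> gamma_adj l n V W \<Longrightarrow> gamma_adj l n W X \<Longrightarrow> path_le l n 3 U X"
  using path_le_trans[OF path_le_adj2 path_le_adj] by (simp add: numeral_3_eq_3)

subsection \<open>Moving part of a part\<close>

locale length_vector =
  fixes l :: "nat \<Rightarrow> real" and n :: nat
  assumes lengths_pos: "\<forall>i\<in>{1..n}. l i > 0"
begin

lemma short_subset:
  assumes "S \<subseteq> T" "T \<subseteq> {1..n}" "short l n T"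
  shows "short l n S"
proof -
  have "sum l S \<le> sum l T"
    using assms(1,2) lengths_pos by (intro sum_mono2) (auto intro: finite_subset less_imp_le)
  with assms(3) show ?thesis
    unfolding short_def by linarith
qed

lemma short_parts:
  assumes "admissible l n [X \<union> S, Y, Z]"
  shows "short l n X" "short l n S"
proof -
  have "X \<union> S \<subseteq> {1..n}" "short l n (X \<union> S)"
    using assms unfolding admissible3_iff by blast+
  then show "short l n X" "short l n S"
    by (meson short_subset Un_upper1 Un_upper2)+
qed

lemma gamma_adj_move_next:
  assumes adm: "admissible l n [X \<union> S, Y, Z]" and "X \<inter> S = {}" "X \<noteq> {}" "S \<noteq> {}"
    and "short l n (S \<union> Y)"
  shows "admissible l n [X, S \<union> Y, Z]" "gamma_adj l n (cyc [X \<union> S, Y, Z]) (cyc [X, S \<union> Y, Z])"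
proof -
  from short_parts[OF adm] assms
  show adm': "admissible l n [X, S \<union> Y, Z]"
    by (auto simp: admissible3_iff Int_Un_distrib Int_Un_distrib2 Un_ac Int_commute)
  from short_parts[OF adm] assms have "admissible l n [X, S, Y, Z]"
    by (auto simp: admissible3_iff admissible4_iff Int_Un_distrib2 Un_ac Int_commute)
  from gamma_adj_of_admissible4[OF this adm adm']
  show "gamma_adj l n (cyc [X \<union> S, Y, Z]) (cyc [X, S \<union> Y, Z])" .
qed

lemma gamma_adj_move_prev:
  assumes adm: "admissible l n [X \<union> S, Y, Z]" and "X \<inter> S = {}" "X \<noteq> {}" "S \<noteq> {}"
    and "short l n (Z \<union> S)"
  shows "admissible l n [X, Y, Z \<union> S]" "gamma_adj l n (cyc [X \<union> S, Y, Z]) (cyc [X, Y, Z \<union> S])"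
proof -
  from short_parts[OF adm] assms show "admissible l n [X, Y, Z \<union> S]"
    by (auto simp: admissible3_iff Int_Un_distrib Int_Un_distrib2 Un_ac)
  from short_parts[OF adm] assms
  have "admissible l n [Z, S, X, Y]" "admissible l n [Z \<union> S, X, Y]" "admissible l n [Z, S \<union> X, Y]"
    by (auto simp: admissible3_iff admissible4_iff Int_Un_distrib Int_Un_distrib2 Un_ac Int_commute)
  then have "gamma_adj l n (cyc [Z \<union> S, X, Y]) (cyc [Z, S \<union> X, Y])"
    by (rule gamma_adj_of_admissible4)
  moreover have "cyc [Z \<union> S, X, Y] = cyc [X, Y, Z \<union> S]" "cyc [Z, S \<union> X, Y] = cyc [X \<union> S, Y, Z]"
    by (auto simp: cyc_three_eq Un_commute)
  ultimately show "gamma_adj l n (cyc [X \<union> S, Y, Z]) (cyc [X, Y, Z \<union> S])"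
    by (simp add: gamma_adj_sym)
qed

lemma path_le_1_if_subset:
  assumes adm: "admissible l n [{m}, B, C]" and adm': "admissible l n [{m}, B', C']"
    and "B \<subseteq> B'"
  shows "path_le l n 1 (cyc [{m}, B, C]) (cyc [{m}, B', C'])"
proof -
  have U: "B \<union> C = B' \<union> C'"
    using admissible3_Un_eq[OF adm] admissible3_Un_eq[OF adm'] by simp
  have "B \<inter> C = {}" "B' \<inter> C' = {}" "C' \<noteq> {}" "short l n B'"
    using adm adm' by (simp_all add: admissible3_iff)
  show ?thesis
  proof (cases "B = B'")
    case True
    with U \<open>B \<inter> C = {}\<close> \<open>B' \<inter> C' = {}\<close> have "C = C'" by blast
    with True show ?thesis by (simp add: path_le_refl)
  next
    case False
    define S where "S = B' - B"
    have C: "C = C' \<union> S" and "C' \<inter> S = {}" "S \<noteq> {}" and B': "B' = B \<union> S"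
      using U \<open>B \<inter> C = {}\<close> \<open>B' \<inter> C' = {}\<close> \<open>B \<subseteq> B'\<close> False unfolding S_def by blast+
    have "admissible l n [C' \<union> S, {m}, B]"
      using admissible3_rotate[OF admissible3_rotate[OF adm]] by (simp add: C)
    then have "gamma_adj l n (cyc [C' \<union> S, {m}, B]) (cyc [C', {m}, B \<union> S])"
      using \<open>C' \<inter> S = {}\<close> \<open>C' \<noteq> {}\<close> \<open>S \<noteq> {}\<close> \<open>short l n B'\<close>
      by (intro gamma_adj_move_prev) (simp_all add: B')
    moreover have "cyc [C' \<union> S, {m}, B] = cyc [{m}, B, C]" "cyc [C', {m}, B \<union> S] = cyc [{m}, B', C']"
      by (auto simp: cyc_three_eq C B')
    ultimately show ?thesis
      by (metis path_le_adj)
  qed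
qed

lemma four_blocks_disjoint:
  assumes "admissible l n [{m}, P \<union> Q, R \<union> T]" "admissible l n [{m}, P \<union> R, Q \<union> T]"
  shows "P \<inter> Q = {}" "R \<inter> T = {}" "Q \<inter> R = {}" "m \<notin> P"
  using assms by (auto simp: admissible3_iff)

lemma four_blocks_path_to_mirror:
  assumes adm: "admissible l n [{m}, P \<union> Q, R \<union> T]" and adm': "admissible l n [{m}, P \<union> R, Q \<union> T]"
    and "P \<noteq> {}" "Q \<noteq> {}" "R \<noteq> {}" "T \<noteq> {}" and "short l n ({m} \<union> P)"
  shows "path_le l n 3 (cyc [{m}, P \<union> Q, R \<union> T]) (cyc [{m}, Q \<union> T, P \<union> R])"
proof -
  note disj = four_blocks_disjoint[OF adm adm']
  have "short l n (Q \<union> T)" "short l n (R \<union> P)"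
    using adm' by (auto simp: admissible3_iff Un_commute)
  have "admissible l n [Q \<union> P, R \<union> T, {m}]"
    using admissible3_rotate[OF adm] by (simp add: Un_commute)
  from gamma_adj_move_prev[OF this] disj assms
  have a1: "admissible l n [Q, R \<union> T, {m} \<union> P]"
    and s1: "gamma_adj l n (cyc [Q \<union> P, R \<union> T, {m}]) (cyc [Q, R \<union> T, {m} \<union> P])"
    by (auto simp: Int_commute)
  from gamma_adj_move_prev[OF admissible3_rotate[OF a1]] disj assms \<open>short l n (Q \<union> T)\<close>
  have a2: "admissible l n [R, {m} \<union> P, Q \<union> T]"
    and s2: "gamma_adj l n (cyc [R \<union> T, {m} \<union> P, Q]) (cyc [R, {m} \<union> P, Q \<union> T])"
    by auto
  from gamma_adj_move_prev[OF admissible3_rotate[OF a2]] disj assms \<open>short l n (R \<union> P)\<close>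
  have s3: "gamma_adj l n (cyc [{m} \<union> P, Q \<union> T, R]) (cyc [{m}, Q \<union> T, R \<union> P])"
    by auto
  have "cyc [Q \<union> P, R \<union> T, {m}] = cyc [{m}, P \<union> Q, R \<union> T]"
    and "cyc [Q, R \<union> T, {m} \<union> P] = cyc [R \<union> T, {m} \<union> P, Q]"
    and "cyc [R, {m} \<union> P, Q \<union> T] = cyc [{m} \<union> P, Q \<union> T, R]"
    and "cyc [{m}, Q \<union> T, R \<union> P] = cyc [{m}, Q \<union> T, P \<union> R]"
    by (auto simp: cyc_three_eq Un_commute)
  with s1 s2 s3 show ?thesis
    using path_le_adj3 by metis
qed

lemma four_blocks_path:
  assumes adm: "admissible l n [{m}, P \<union> Q, R \<union> T]" and adm': "admissible l n [{m}, P \<union> R, Q \<union> T]"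
    and "P \<noteq> {}" "Q \<noteq> {}" "R \<noteq> {}" and "short l n (Q \<union> (R \<union> T))"
  shows "path_le l n 2 (cyc [{m}, P \<union> Q, R \<union> T]) (cyc [{m}, P \<union> R, Q \<union> T])"
proof -
  note disj = four_blocks_disjoint[OF adm adm']
  have "short l n (P \<union> R)" "Q \<union> T \<noteq> {}"
    using adm' by (simp_all add: admissible3_iff)
  from gamma_adj_move_next[OF admissible3_rotate[OF adm]] disj assms
  have a1: "admissible l n [P, Q \<union> (R \<union> T), {m}]"
    and s1: "gamma_adj l n (cyc [P \<union> Q, R \<union> T, {m}]) (cyc [P, Q \<union> (R \<union> T), {m}])"
    by auto
  have "admissible l n [(Q \<union> T) \<union> R, {m}, P]"
    using admissible3_rotate[OF a1] by (simp add: Un_ac)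
  from gamma_adj_move_prev[OF this] disj assms \<open>short l n (P \<union> R)\<close> \<open>Q \<union> T \<noteq> {}\<close>
  have s2: "gamma_adj l n (cyc [(Q \<union> T) \<union> R, {m}, P]) (cyc [Q \<union> T, {m}, P \<union> R])"
    by (auto simp: Int_Un_distrib2 Int_commute)
  have "cyc [P \<union> Q, R \<union> T, {m}] = cyc [{m}, P \<union> Q, R \<union> T]"
    and "cyc [P, Q \<union> (R \<union> T), {m}] = cyc [(Q \<union> T) \<union> R, {m}, P]"
    and "cyc [Q \<union> T, {m}, P \<union> R] = cyc [{m}, P \<union> R, Q \<union> T]"
    by (auto simp: cyc_three_eq Un_ac)
  with s1 s2 show ?thesis
    using path_le_adj2 by metis
qed

end

subsection \<open>Generic length vectors\<close>

locale generic_length_vector = length_vector +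
  assumes generic: "\<forall>J. J \<subseteq> {1..n} \<longrightarrow> (\<Sum>i\<in>J. l i) \<noteq> (\<Sum>i\<in>{1..n} - J. l i)"
begin

lemma short_complement:
  assumes "A \<union> B = {1..n}" "A \<inter> B = {}"
  shows "short l n A \<longleftrightarrow> \<not> short l n B"
proof -
  have sub: "A \<subseteq> {1..n}" "B \<subseteq> {1..n}"
    using assms(1) by blast+
  have "sum l A + sum l B = total_len l n"
    using sum_Un_disjoint_atLeastAtMost[OF sub assms(2), of l] assms(1) unfolding total_len_def by simp
  moreover have "B = {1..n} - A"
    using assms by blast
  with generic sub(1) have "sum l A \<noteq> sum l B"
    by blast
  ultimately show ?thesis
    unfolding short_def by linarith
qed

lemma path_to_singleton_part_by_splitting:
  assumes heavy: "\<forall>i\<in>{1..n}. l i \<le> l m"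
    and adm: "admissible l n [{m} \<union> R, J, K]" and "m \<notin> R"
    and long_J: "\<not> short l n (R \<union> J)" and long_K: "\<not> short l n (K \<union> R)"
  shows "\<exists>B C. admissible l n [{m}, B, C] \<and> path_le l n 2 (cyc [{m} \<union> R, J, K]) (cyc [{m}, B, C])"
proof -
  define h where "h = total_len l n / 2"
  have sub: "m \<in> {1..n}" "R \<subseteq> {1..n}" "J \<subseteq> {1..n}" "K \<subseteq> {1..n}"
    using admissible3_union[OF adm] by auto
  have parts: "({m} \<union> R) \<union> J \<union> K = {1..n}" "R \<inter> J = {}" "R \<inter> K = {}" "J \<inter> K = {}"
    "m \<notin> J" "m \<notin> K" "short l n J"
    using adm by (auto simp: admissible3_iff)
  have sum_Un: "sum l (X \<union> Y) = sum l X + sum l Y" if "X \<union> Y \<subseteq> {1..n}" "X \<inter> Y = {}" for X Y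
    using that by (intro sum_Un_disjoint_atLeastAtMost) auto
  have "finite R"
    using sub(2) by (rule finite_subset) simp
  have "sum l J < h" "h \<le> sum l J + sum l R"
    using parts long_J sum_Un[of R J] sub unfolding short_def h_def by auto
  from sum_crosses_threshold[OF \<open>finite R\<close> this] obtain R1 e
    where R1: "R1 \<subseteq> R" "e \<in> R - R1" "sum l J + sum l R1 < h" "h \<le> sum l J + sum l R1 + l e"
    by blast
  define R2 where "R2 = R - R1"
  have R1_facts: "R1 \<subseteq> {1..n}" "R1 \<inter> J = {}" "m \<notin> R1"
    using R1(1) sub parts \<open>m \<notin> R\<close> by blast+
  have "short l n ({m} \<union> J)"
    using short_complement[of "{m} \<union> J" "K \<union> R"] long_K parts \<open>m \<notin> R\<close> by blast
  then have "l m + sum l J < h"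
    using sum_Un[of "{m}" J] sub parts unfolding short_def h_def by auto
  moreover have "l e \<le> l m"
    using heavy R1(2) sub by blast
  ultimately have "R1 \<noteq> {}"
    using R1(4) by auto
  have "short l n (R1 \<union> J)"
    using R1(3) sum_Un[of R1 J] sub R1_facts unfolding short_def h_def by auto
  with gamma_adj_move_next[of "{m} \<union> R2" R1 J K] adm R1(1,2) \<open>R1 \<noteq> {}\<close> \<open>m \<notin> R\<close>
  have a1: "admissible l n [{m} \<union> R2, R1 \<union> J, K]"
    and s1: "gamma_adj l n (cyc [{m} \<union> R, J, K]) (cyc [{m} \<union> R2, R1 \<union> J, K])"
    unfolding R2_def by (auto simp: Un_absorb2 Un_assoc)
  have "\<not> short l n ({m} \<union> R1 \<union> J)"
    using sum_Un[of "{m}" R1] sum_Un[of "{m} \<union> R1" J] sub parts R1 R1_facts \<open>l e \<le> l m\<close>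
    unfolding short_def h_def by auto
  then have "short l n (K \<union> R2)"
    using short_complement[of "{m} \<union> R1 \<union> J" "K \<union> R2"] parts R1(1) \<open>m \<notin> R\<close> unfolding R2_def by blast
  with gamma_adj_move_prev[of "{m}" R2 "R1 \<union> J" K] a1 R1(2) \<open>m \<notin> R\<close>
  have a2: "admissible l n [{m}, R1 \<union> J, K \<union> R2]"
    and s2: "gamma_adj l n (cyc [{m} \<union> R2, R1 \<union> J, K]) (cyc [{m}, R1 \<union> J, K \<union> R2])"
    unfolding R2_def by auto
  from a2 path_le_adj2[OF s1 s2] show ?thesis by blast
qed

lemma path_to_singleton_part:
  assumes heavy: "\<forall>i\<in>{1..n}. l i \<le> l m" and "m \<in> {1..n}" and "V \<in> gamma_vertices l n"
  shows "\<exists>B C. admissible l n [{m}, B, C] \<and> path_le l n 2 V (cyc [{m}, B, C])"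
proof -
  obtain I J K where V: "V = cyc [I, J, K]" and adm: "admissible l n [I, J, K]" and "m \<in> I"
    using gamma_vertex_with_part[OF assms(3,2)] by blast
  define R where "R = I - {m}"
  have I: "I = {m} \<union> R" "m \<notin> R"
    using \<open>m \<in> I\<close> unfolding R_def by blast+
  with adm have adm: "admissible l n [{m} \<union> R, J, K]" by simp
  have "{m} \<inter> R = {}" using I by blast
  consider "R = {}" | "R \<noteq> {}" "short l n (R \<union> J)" | "R \<noteq> {}" "short l n (K \<union> R)"
    | "\<not> short l n (R \<union> J)" "\<not> short l n (K \<union> R)"
    by blast
  then show ?thesis
  proof cases
    case 1
    with adm V I show ?thesis by (auto intro: path_le_refl)
  next
    case 2
    with gamma_adj_move_next[OF adm \<open>{m} \<inter> R = {}\<close>]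
    have "admissible l n [{m}, R \<union> J, K]" "gamma_adj l n V (cyc [{m}, R \<union> J, K])"
      using V I by auto
    then show ?thesis
      by (meson path_le_adj path_le_mono one_le_numeral)
  next
    case 3
    with gamma_adj_move_prev[OF adm \<open>{m} \<inter> R = {}\<close>]
    have "admissible l n [{m}, J, K \<union> R]" "gamma_adj l n V (cyc [{m}, J, K \<union> R])"
      using V I by auto
    then show ?thesis
      by (meson path_le_adj path_le_mono one_le_numeral)
  next
    case 4
    with path_to_singleton_part_by_splitting[OF heavy adm] V I show ?thesis by simp
  qed
qed

lemma four_blocks_path_or_mirror:
  assumes adm: "admissible l n [{m}, P \<union> Q, R \<union> T]" and adm': "admissible l n [{m}, P \<union> R, Q \<union> T]"
    and "P \<noteq> {}" "Q \<noteq> {}" "R \<noteq> {}" "T \<noteq> {}"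
  shows "path_le l n 3 (cyc [{m}, P \<union> Q, R \<union> T]) (cyc [{m}, P \<union> R, Q \<union> T])
    \<or> path_le l n 3 (cyc [{m}, P \<union> Q, R \<union> T]) (cyc [{m}, Q \<union> T, P \<union> R])"
proof -
  have "({m} \<union> P) \<union> (Q \<union> (R \<union> T)) = {m} \<union> (P \<union> Q) \<union> (R \<union> T)"
    by blast
  also have "\<dots> = {1..n}"
    using adm by (rule admissible3_union)
  finally have cover: "({m} \<union> P) \<union> (Q \<union> (R \<union> T)) = {1..n}" .
  have "{m} \<inter> (P \<union> Q) = {}" "{m} \<inter> (R \<union> T) = {}" "(P \<union> Q) \<inter> (R \<union> T) = {}"
    using adm unfolding admissible3_iff by blast+
  with four_blocks_disjoint[OF adm adm']
  have "({m} \<union> P) \<inter> (Q \<union> (R \<union> T)) = {}"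
    by auto
  with cover have "short l n ({m} \<union> P) \<or> short l n (Q \<union> (R \<union> T))"
    using short_complement by blast
  then show ?thesis
  proof
    assume "short l n ({m} \<union> P)"
    from four_blocks_path_to_mirror[OF adm adm' assms(3-6) this] show ?thesis ..
  next
    assume "short l n (Q \<union> (R \<union> T))"
    from four_blocks_path[OF adm adm' assms(3-5) this] show ?thesis
      using path_le_mono by fastforce
  qed
qed

lemma path_between_singleton_parts:
  assumes adm: "admissible l n [{m}, B, C]" and adm': "admissible l n [{m}, B', C']"
  shows "path_le l n 3 (cyc [{m}, B, C]) (cyc [{m}, B', C'])
    \<or> path_le l n 3 (cyc [{m}, B, C]) (cyc [{m}, C', B'])"
proof -
  have adm'': "admissible l n [{m}, C', B']"
    using admissible3_rotate[OF admissible3_rotate[OF admissible3_rev[OF adm']]] .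
  have one_step: "path_le l n 3 (cyc [{m}, B, C]) (cyc [{m}, X, Y])"
    if "admissible l n [{m}, X, Y]" "B \<subseteq> X \<or> X \<subseteq> B" for X Y
    using that path_le_1_if_subset[OF adm] path_le_1_if_subset[OF _ adm] path_le_sym
    by (meson path_le_mono one_le_numeral)
  have U: "B \<union> C = B' \<union> C'"
    using admissible3_Un_eq[OF adm] admissible3_Un_eq[OF adm'] by simp
  have disj: "B \<inter> C = {}" "B' \<inter> C' = {}"
    using adm adm' by (simp_all add: admissible3_iff)
  show ?thesis
  proof (cases "B \<subseteq> B' \<or> B' \<subseteq> B \<or> B \<subseteq> C' \<or> C' \<subseteq> B")
    case True
    with one_step adm' adm'' show ?thesis by blast
  next
    case False
    define P where "P = B \<inter> B'"
    define Q where "Q = B \<inter> C'"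
    define R where "R = C \<inter> B'"
    define T where "T = C \<inter> C'"
    have blocks: "B = P \<union> Q" "C = R \<union> T" "B' = P \<union> R" "C' = Q \<union> T"
      using U disj unfolding P_def Q_def R_def T_def by blast+
    have "P \<noteq> {}" "Q \<noteq> {}" "R \<noteq> {}" "T \<noteq> {}"
      using U disj False unfolding P_def Q_def R_def T_def by blast+
    with four_blocks_path_or_mirror[of m P Q R T] adm adm' show ?thesis
      unfolding blocks by blast
  qed
qed

end

theorem mainTheorem8:
  fixes l :: "nat \<Rightarrow> real" and n :: nat
  assumes "n \<ge> 4"
    and "\<forall>i\<in>{1..n}. l i > 0"
    and "\<forall>i\<in>{1..n}. l i < (\<Sum>j\<in>{1..n} - {i}. l j)"
    and "\<forall>J. J \<subseteq> {1..n} \<longrightarrow> (\<Sum>i\<in>J. l i) \<noteq> (\<Sum>i\<in>{1..n} - J. l i)"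
    and "V \<in> gamma_vertices l n" and "V' \<in> gamma_vertices l n"
  shows "path_le l n 7 V V' \<or> path_le l n 7 V (mirror V')"
proof -
  interpret generic_length_vector l n
    using assms(2,4) by unfold_locales
  have "Max (l ` {1..n}) \<in> l ` {1..n}"
    using assms(1) by simp
  then obtain m where m: "m \<in> {1..n}" and "l m = Max (l ` {1..n})"
    by auto
  then have heavy: "\<forall>i\<in>{1..n}. l i \<le> l m"
    by simp
  obtain B C where adm: "admissible l n [{m}, B, C]" and to: "path_le l n 2 V (cyc [{m}, B, C])"
    using path_to_singleton_part[OF heavy m assms(5)] by blast
  obtain B' C' where adm': "admissible l n [{m}, B', C']"
    and from': "path_le l n 2 (cyc [{m}, B', C']) V'"
    using path_to_singleton_part[OF heavy m assms(6)] path_le_sym by blast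
  have "mirror (cyc [{m}, B', C']) = cyc [{m}, C', B']"
    unfolding mirror_cyc_three by (auto simp: cyc_three_eq)
  with path_le_mirror[OF from'] have from_mirror: "path_le l n 2 (cyc [{m}, C', B']) (mirror V')"
    by simp
  from path_between_singleton_parts[OF adm adm'] show ?thesis
  proof
    assume "path_le l n 3 (cyc [{m}, B, C]) (cyc [{m}, B', C'])"
    from path_le_trans[OF path_le_trans[OF to this] from'] show ?thesis by simp
  next
    assume "path_le l n 3 (cyc [{m}, B, C]) (cyc [{m}, C', B'])"
    from path_le_trans[OF path_le_trans[OF to this] from_mirror] show ?thesis by simp
  qed
qed

end
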